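(* Let t₁ and t₂ be regular terms in the language of strong quasi-Wajsberg* algebras. Then the equation t₁ ≈ t₂ holds in all strong quasi-Wajsberg* algebras iff it holds in all Wajsberg* algebras.
   Context: A quasi-Wajsberg* algebra is an algebra ⟨W; →, ¬, ⁺, ⁻, 1⟩ of type ⟨2,1,1,1,0⟩ satisfying: x→y = ¬y→¬x; (x→1)→((y→1)→z) = (y→1)→((x→1)→z); (1→x)→1 = 1; (z→z)→(x→y) = x→y; (1→1)→x⁺ = ((1→1)→x)⁺ = (x→1)→1 and (1→1)→x⁻ = ((1→1)→x)⁻ = (x→¬1)→¬1; x→y = (y⁺→x⁻)→(x⁺→y⁻); ¬(x→y) = y→x; ¬¬x = x; (x→(¬x→y))⁺ = x⁺→(¬x⁺→y⁺); x∨y = y∨x; x∨(y∨z) = (x∨y)∨z; x→(y∨z) = (x→y)∨(x→z); where x∨y = ((x⁺→y⁺)⁺→(¬x)⁻)→((y⁻→x⁻)⁻→x⁻). A strong quasi-Wajsberg* algebra is a quasi-Wajsberg* algebra satisfying x⁺ = (1→1)→x⁺ and x⁻ = (1→1)→x⁻ for all x. A Wajsberg* algebra is an algebra ⟨M; →, ¬, 1⟩ satisfying the analogous axioms with (y→y)→x = x in place of (z→z)→(x→y) = x→y, where x⁺ = (x→1)→1 and x⁻ = (x→¬1)→¬1; every Wajsberg* algebra is a strong quasi-Wajsberg* algebra. A term in the language of strong quasi-Wajsberg* algebras (built from variables, →, ¬, 1) is called regular if it contains → or 1; the non-regular terms are exactly ¬ⁿp with p a variable and n ≥ 0. *)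

theory Defs
  imports Main
begin

datatype trm = Var nat | Imp trm trm | Neg trm | One

fun regular :: "trm \<Rightarrow> bool" where
  "regular (Var p) = False"
| "regular (Imp s t) = True"
| "regular (Neg t) = regular t"
| "regular One = True"

record 'a wstar_alg =
  carrier :: "'a set"
  imp :: "'a \<Rightarrow> 'a \<Rightarrow> 'a"
  neg :: "'a \<Rightarrow> 'a"
  one :: "'a"

record 'a qw_alg = "'a wstar_alg" +
  pls :: "'a \<Rightarrow> 'a"
  mns :: "'a \<Rightarrow> 'a"

text \<open>Axioms shared by quasi-Wajsberg* and Wajsberg* algebras, parametrised by
  the operations; in the Wajsberg* case plus and minus are the defined ones.\<close>
definition common_axioms ::
  "'a set \<Rightarrow> ('a \<Rightarrow> 'a \<Rightarrow> 'a) \<Rightarrow> ('a \<Rightarrow> 'a) \<Rightarrow> ('a \<Rightarrow> 'a) \<Rightarrow> ('a \<Rightarrow> 'a) \<Rightarrow> 'a \<Rightarrow> bool" where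
  "common_axioms C im ng pl mn o1 \<longleftrightarrow>
     (let J = (\<lambda>x y. im (im (pl (im (pl x) (pl y))) (mn (ng x)))
                        (im (mn (im (mn y) (mn x))) (mn x)))
      in
     o1 \<in> C \<and>
     (\<forall>x\<in>C. \<forall>y\<in>C. im x y \<in> C) \<and>
     (\<forall>x\<in>C. ng x \<in> C) \<and> (\<forall>x\<in>C. pl x \<in> C) \<and> (\<forall>x\<in>C. mn x \<in> C) \<and>
     (\<forall>x\<in>C. \<forall>y\<in>C. im x y = im (ng y) (ng x)) \<and>
     (\<forall>x\<in>C. \<forall>y\<in>C. \<forall>z\<in>C.
        im (im x o1) (im (im y o1) z) = im (im y o1) (im (im x o1) z)) \<and>
     (\<forall>x\<in>C. im (im o1 x) o1 = o1) \<and>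
     (\<forall>x\<in>C. im (im o1 o1) (pl x) = pl (im (im o1 o1) x) \<and>
              pl (im (im o1 o1) x) = im (im x o1) o1) \<and>
     (\<forall>x\<in>C. im (im o1 o1) (mn x) = mn (im (im o1 o1) x) \<and>
              mn (im (im o1 o1) x) = im (im x (ng o1)) (ng o1)) \<and>
     (\<forall>x\<in>C. \<forall>y\<in>C. im x y = im (im (pl y) (mn x)) (im (pl x) (mn y))) \<and>
     (\<forall>x\<in>C. \<forall>y\<in>C. ng (im x y) = im y x) \<and>
     (\<forall>x\<in>C. ng (ng x) = x) \<and>
     (\<forall>x\<in>C. \<forall>y\<in>C. pl (im x (im (ng x) y)) = im (pl x) (im (ng (pl x)) (pl y))) \<and>
     (\<forall>x\<in>C. \<forall>y\<in>C. J x y = J y x) \<and>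
     (\<forall>x\<in>C. \<forall>y\<in>C. \<forall>z\<in>C. J x (J y z) = J (J x y) z) \<and>
     (\<forall>x\<in>C. \<forall>y\<in>C. \<forall>z\<in>C. im x (J y z) = J (im x y) (im x z)))"

definition quasi_wajsberg_star :: "'a qw_alg \<Rightarrow> bool" where
  "quasi_wajsberg_star A \<longleftrightarrow>
     common_axioms (carrier A) (imp A) (neg A) (pls A) (mns A) (one A) \<and>
     (\<forall>x\<in>carrier A. \<forall>y\<in>carrier A. \<forall>z\<in>carrier A.
        imp A (imp A z z) (imp A x y) = imp A x y)"

definition strong_quasi_wajsberg_star :: "'a qw_alg \<Rightarrow> bool" where
  "strong_quasi_wajsberg_star A \<longleftrightarrow>
     quasi_wajsberg_star A \<and>
     (\<forall>x\<in>carrier A. pls A x = imp A (imp A (one A) (one A)) (pls A x) \<and>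
                     mns A x = imp A (imp A (one A) (one A)) (mns A x))"

definition wajsberg_star :: "'a wstar_alg \<Rightarrow> bool" where
  "wajsberg_star M \<longleftrightarrow>
     common_axioms (carrier M) (imp M) (neg M)
       (\<lambda>x. imp M (imp M x (one M)) (one M))
       (\<lambda>x. imp M (imp M x (neg M (one M))) (neg M (one M))) (one M) \<and>
     (\<forall>x\<in>carrier M. \<forall>y\<in>carrier M. imp M (imp M y y) x = x)"

fun eval :: "('a, 'b) wstar_alg_scheme \<Rightarrow> (nat \<Rightarrow> 'a) \<Rightarrow> trm \<Rightarrow> 'a" where
  "eval A v (Var p) = v p"
| "eval A v (Imp s t) = imp A (eval A v s) (eval A v t)"
| "eval A v (Neg t) = neg A (eval A v t)"
| "eval A v One = one A"

definition holds_in :: "('a, 'b) wstar_alg_scheme \<Rightarrow> trm \<Rightarrow> trm \<Rightarrow> bool" where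
  "holds_in A s t \<longleftrightarrow> (\<forall>v. (\<forall>p. v p \<in> carrier A) \<longrightarrow> eval A v s = eval A v t)"

end

(* Put r x = (1 -> 1) -> x in a strong quasi-Wajsberg* algebra A. Every implication is
   fixed by r, r commutes with negation and fixes 1, and r x -> r y = x -> y because the
   decomposition axiom expresses x -> y through x+, x-, y+, y-, which do not change when x, y
   are replaced by r x, r y. So the image r[A] is closed under the operations, it is a
   Wajsberg* algebra (strength makes + and - the defined operations there), and r is a
   homomorphism from A onto it. The value of a regular term is fixed by r, so an equation
   between regular terms that holds in r[A], applied to the valuation r o v, holds in A.
   Conversely, a Wajsberg* algebra with + and - interpreted by their defining terms is a
   strong quasi-Wajsberg* algebra. *)

theory Submission
  imports Defs
begin

lemma eval_cong:
  assumes "imp A = imp B" and "neg A = neg B" and "one A = one B"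
  shows "eval A v t = eval B v t"
  using assms by (induction t) auto

lemma eval_closed:
  assumes "one A \<in> carrier A"
    and "\<And>x y. x \<in> carrier A \<Longrightarrow> y \<in> carrier A \<Longrightarrow> imp A x y \<in> carrier A"
    and "\<And>x. x \<in> carrier A \<Longrightarrow> neg A x \<in> carrier A"
    and "\<And>p. v p \<in> carrier A"
  shows "eval A v t \<in> carrier A"
  using assms by (induction t) auto

lemma
  assumes "common_axioms C im ng pl mn o1"
  shows common_axioms_one_closed: "o1 \<in> C"
    and common_axioms_imp_closed [rule_format]: "\<forall>x\<in>C. \<forall>y\<in>C. im x y \<in> C"
    and common_axioms_neg_closed [rule_format]: "\<forall>x\<in>C. ng x \<in> C"
    and common_axioms_pls_closed [rule_format]: "\<forall>x\<in>C. pl x \<in> C"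
    and common_axioms_mns_closed [rule_format]: "\<forall>x\<in>C. mn x \<in> C"
    and common_axioms_contrapos [rule_format]: "\<forall>x\<in>C. \<forall>y\<in>C. im x y = im (ng y) (ng x)"
    and common_axioms_one_imp_imp_one [rule_format]: "\<forall>x\<in>C. im (im o1 x) o1 = o1"
    and common_axioms_pls [rule_format]: "\<forall>x\<in>C. im (im o1 o1) (pl x) = pl (im (im o1 o1) x) \<and>
              pl (im (im o1 o1) x) = im (im x o1) o1"
    and common_axioms_mns [rule_format]: "\<forall>x\<in>C. im (im o1 o1) (mn x) = mn (im (im o1 o1) x) \<and>
              mn (im (im o1 o1) x) = im (im x (ng o1)) (ng o1)"
    and common_axioms_imp_decompose [rule_format]:
      "\<forall>x\<in>C. \<forall>y\<in>C. im x y = im (im (pl y) (mn x)) (im (pl x) (mn y))"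
    and common_axioms_neg_imp [rule_format]: "\<forall>x\<in>C. \<forall>y\<in>C. ng (im x y) = im y x"
  using assms unfolding common_axioms_def Let_def by - (elim conjE; assumption)+

lemma common_axioms_cong:
  assumes "common_axioms C im ng pl mn o1"
    and pl: "\<And>x. x \<in> C \<Longrightarrow> pl x = pl' x" and mn: "\<And>x. x \<in> C \<Longrightarrow> mn x = mn' x"
  shows "common_axioms C im ng pl' mn' o1"
proof -
  note closed = common_axioms_one_closed[OF assms(1)] common_axioms_imp_closed[OF assms(1)]
    common_axioms_neg_closed[OF assms(1)]
  have closed': "pl' x \<in> C" "mn' x \<in> C" if "x \<in> C" for x
    using that pl mn common_axioms_pls_closed[OF assms(1)] common_axioms_mns_closed[OF assms(1)]
    by metis+
  have "common_axioms C im ng pl mn o1 = common_axioms C im ng pl' mn' o1"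
    unfolding common_axioms_def Let_def by (simp add: closed closed' pl mn)
  with assms(1) show ?thesis by simp
qed

lemma common_axioms_subalgebra:
  assumes "common_axioms C im ng pl mn o1" and "R \<subseteq> C" and "o1 \<in> R"
    and "\<And>x y. x \<in> R \<Longrightarrow> y \<in> R \<Longrightarrow> im x y \<in> R" and "\<And>x. x \<in> R \<Longrightarrow> ng x \<in> R"
    and "\<And>x. x \<in> R \<Longrightarrow> pl x \<in> R" and "\<And>x. x \<in> R \<Longrightarrow> mn x \<in> R"
  shows "common_axioms R im ng pl mn o1"
proof -
  have closed: "\<forall>x\<in>R. \<forall>y\<in>R. im x y \<in> R" "\<forall>x\<in>R. ng x \<in> R" "\<forall>x\<in>R. pl x \<in> R"
    "\<forall>x\<in>R. mn x \<in> R"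
    using assms(4-7) by blast+
  have restrict1: "\<forall>x\<in>R. P x" if "\<forall>x\<in>C. P x" for P
    using that assms(2) by blast
  have restrict2: "\<forall>x\<in>R. \<forall>y\<in>R. P x y" if "\<forall>x\<in>C. \<forall>y\<in>C. P x y" for P
    using that assms(2) by blast
  have restrict3: "\<forall>x\<in>R. \<forall>y\<in>R. \<forall>z\<in>R. P x y z" if "\<forall>x\<in>C. \<forall>y\<in>C. \<forall>z\<in>C. P x y z" for P
    using that assms(2) by blast
  show ?thesis
    using assms(1) unfolding common_axioms_def Let_def
    by (elim conjE)
      (intro conjI; (rule assms(3) closed | (rule restrict3 restrict2 restrict1, assumption)))
qed

definition qw_of_wstar :: "'a wstar_alg \<Rightarrow> 'a qw_alg" where
  "qw_of_wstar M =
     \<lparr>carrier = carrier M, imp = imp M, neg = neg M, one = one M,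
      pls = \<lambda>x. imp M (imp M x (one M)) (one M),
      mns = \<lambda>x. imp M (imp M x (neg M (one M))) (neg M (one M))\<rparr>"

lemma strong_quasi_wajsberg_star_qw_of_wstar:
  assumes "wajsberg_star M"
  shows "strong_quasi_wajsberg_star (qw_of_wstar M)"
proof -
  have axioms: "common_axioms (carrier M) (imp M) (neg M)
       (\<lambda>x. imp M (imp M x (one M)) (one M))
       (\<lambda>x. imp M (imp M x (neg M (one M))) (neg M (one M))) (one M)"
    and imp_self_imp: "\<And>x y. x \<in> carrier M \<Longrightarrow> y \<in> carrier M \<Longrightarrow> imp M (imp M y y) x = x"
    using assms unfolding wajsberg_star_def by auto
  note closed = common_axioms_one_closed[OF axioms] common_axioms_imp_closed[OF axioms]
    common_axioms_neg_closed[OF axioms]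
  show ?thesis
    unfolding strong_quasi_wajsberg_star_def quasi_wajsberg_star_def
    using axioms by (simp add: qw_of_wstar_def closed imp_self_imp)
qed

lemma holds_in_qw_of_wstar: "holds_in (qw_of_wstar M) s t \<longleftrightarrow> holds_in M s t"
proof -
  have "eval (qw_of_wstar M) v u = eval M v u" for v u
    by (rule eval_cong) (simp_all add: qw_of_wstar_def)
  then show ?thesis
    unfolding holds_in_def by (simp add: qw_of_wstar_def)
qed

definition regularize :: "'a qw_alg \<Rightarrow> 'a \<Rightarrow> 'a" where
  "regularize A x = imp A (imp A (one A) (one A)) x"

definition regular_part :: "'a qw_alg \<Rightarrow> 'a wstar_alg" where
  "regular_part A =
     \<lparr>carrier = regularize A ` carrier A, imp = imp A, neg = neg A, one = one A\<rparr>"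

locale strong_quasi_wajsberg_star_algebra =
  fixes A :: "'a qw_alg"
  assumes strong: "strong_quasi_wajsberg_star A"
begin

lemma axioms: "common_axioms (carrier A) (imp A) (neg A) (pls A) (mns A) (one A)"
  using strong unfolding strong_quasi_wajsberg_star_def quasi_wajsberg_star_def by blast

lemma imp_self_imp_imp:
  "x \<in> carrier A \<Longrightarrow> y \<in> carrier A \<Longrightarrow> z \<in> carrier A \<Longrightarrow>
    imp A (imp A z z) (imp A x y) = imp A x y"
  using strong unfolding strong_quasi_wajsberg_star_def quasi_wajsberg_star_def by blast

lemmas one_closed = common_axioms_one_closed[OF axioms]
  and imp_closed = common_axioms_imp_closed[OF axioms]
  and neg_closed = common_axioms_neg_closed[OF axioms]

lemma regularize_closed: "x \<in> carrier A \<Longrightarrow> regularize A x \<in> carrier A"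
  unfolding regularize_def by (simp add: imp_closed one_closed)

lemma pls_eq: "x \<in> carrier A \<Longrightarrow> pls A x = imp A (imp A x (one A)) (one A)"
  using strong common_axioms_pls[OF axioms]
  unfolding strong_quasi_wajsberg_star_def by metis

lemma mns_eq: "x \<in> carrier A \<Longrightarrow> mns A x = imp A (imp A x (neg A (one A))) (neg A (one A))"
  using strong common_axioms_mns[OF axioms]
  unfolding strong_quasi_wajsberg_star_def by metis

lemma pls_regularize: "x \<in> carrier A \<Longrightarrow> pls A (regularize A x) = pls A x"
  using common_axioms_pls[OF axioms] pls_eq unfolding regularize_def by metis

lemma mns_regularize: "x \<in> carrier A \<Longrightarrow> mns A (regularize A x) = mns A x"
  using common_axioms_mns[OF axioms] mns_eq unfolding regularize_def by metis

lemma regularize_imp: "x \<in> carrier A \<Longrightarrow> y \<in> carrier A \<Longrightarrow> regularize A (imp A x y) = imp A x y"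
  unfolding regularize_def by (simp add: imp_self_imp_imp one_closed)

lemma regularize_one: "regularize A (one A) = one A"
  unfolding regularize_def by (simp add: common_axioms_one_imp_imp_one[OF axioms] one_closed)

lemma imp_regularize:
  assumes "x \<in> carrier A" and "y \<in> carrier A"
  shows "imp A (regularize A x) (regularize A y) = imp A x y"
  using common_axioms_imp_decompose[OF axioms] assms
  by (simp add: regularize_closed pls_regularize mns_regularize)

lemma regularize_neg:
  assumes "x \<in> carrier A"
  shows "regularize A (neg A x) = neg A (regularize A x)"
proof -
  let ?e = "imp A (one A) (one A)"
  have e_closed: "?e \<in> carrier A"
    by (simp add: imp_closed one_closed)
  have "neg A ?e = ?e"
    by (simp add: common_axioms_neg_imp[OF axioms] one_closed)
  then have "neg A (imp A ?e x) = imp A ?e (neg A x)"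
    using assms e_closed common_axioms_neg_imp[OF axioms] common_axioms_contrapos[OF axioms]
    by metis
  then show ?thesis
    unfolding regularize_def by simp
qed

lemma imp_self_imp_regularize:
  "x \<in> carrier A \<Longrightarrow> y \<in> carrier A \<Longrightarrow> imp A (imp A y y) (regularize A x) = regularize A x"
  unfolding regularize_def by (simp add: imp_self_imp_imp imp_closed one_closed)

lemma wajsberg_star_regular_part: "wajsberg_star (regular_part A)"
proof -
  let ?R = "regularize A ` carrier A"
  have R_sub: "?R \<subseteq> carrier A"
    using regularize_closed by blast
  have one_R: "one A \<in> ?R"
    using regularize_one one_closed by (metis image_eqI)
  have imp_R: "imp A x y \<in> ?R" if "x \<in> ?R" "y \<in> ?R" for x y
    using that R_sub regularize_imp imp_closed by (metis image_eqI subsetD)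
  have neg_R: "neg A x \<in> ?R" if "x \<in> ?R" for x
  proof -
    obtain a where "a \<in> carrier A" and "x = regularize A a"
      using \<open>x \<in> ?R\<close> by blast
    then show ?thesis
      by (simp flip: regularize_neg add: neg_closed)
  qed
  have "common_axioms (carrier A) (imp A) (neg A)
      (\<lambda>x. imp A (imp A x (one A)) (one A))
      (\<lambda>x. imp A (imp A x (neg A (one A))) (neg A (one A))) (one A)"
    using axioms by (rule common_axioms_cong) (simp_all add: pls_eq mns_eq)
  then have "common_axioms ?R (imp A) (neg A)
      (\<lambda>x. imp A (imp A x (one A)) (one A))
      (\<lambda>x. imp A (imp A x (neg A (one A))) (neg A (one A))) (one A)"
    by (rule common_axioms_subalgebra) (simp_all add: R_sub one_R imp_R neg_R)
  moreover have "imp A (imp A y y) x = x" if "x \<in> ?R" "y \<in> ?R" for x y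
    using that R_sub imp_self_imp_regularize by auto
  ultimately show ?thesis
    unfolding wajsberg_star_def by (simp add: regular_part_def)
qed

lemmas eval_closed_carrier = eval_closed[OF one_closed imp_closed neg_closed]

lemma eval_regularize:
  assumes "\<And>p. v p \<in> carrier A"
  shows "eval A (regularize A \<circ> v) t = regularize A (eval A v t)"
  by (induction t)
    (simp_all add: assms eval_closed_carrier imp_regularize regularize_imp regularize_neg
      regularize_one)

lemma regularize_eval_regular:
  assumes "\<And>p. v p \<in> carrier A" and "regular t"
  shows "regularize A (eval A v t) = eval A v t"
  using assms(2)
  by (induction t)
    (simp_all add: assms(1) eval_closed_carrier regularize_imp regularize_neg regularize_one)

lemma holds_in_regular_part:
  assumes "regular s" and "regular t" and "holds_in (regular_part A) s t"
  shows "holds_in A s t"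
  unfolding holds_in_def
proof (intro allI impI)
  fix v :: "nat \<Rightarrow> 'a"
  assume "\<forall>p. v p \<in> carrier A"
  then have v: "\<And>p. v p \<in> carrier A" by blast
  have "eval (regular_part A) (regularize A \<circ> v) s = eval (regular_part A) (regularize A \<circ> v) t"
    using assms(3) v unfolding holds_in_def by (simp add: regular_part_def)
  moreover have "eval (regular_part A) w u = eval A w u" for w u
    by (rule eval_cong) (simp_all add: regular_part_def)
  ultimately have "regularize A (eval A v s) = regularize A (eval A v t)"
    by (simp add: eval_regularize v)
  then show "eval A v s = eval A v t"
    by (simp add: regularize_eval_regular v assms(1,2))
qed

end

theorem proposition3p7:
  fixes t1 t2 :: trm
  assumes "regular t1" and "regular t2"
  shows "(\<forall>A :: 'a qw_alg. strong_quasi_wajsberg_star A \<longrightarrow> holds_in A t1 t2) \<longleftrightarrow>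
         (\<forall>M :: 'a wstar_alg. wajsberg_star M \<longrightarrow> holds_in M t1 t2)"
proof
  assume "\<forall>A :: 'a qw_alg. strong_quasi_wajsberg_star A \<longrightarrow> holds_in A t1 t2"
  then show "\<forall>M :: 'a wstar_alg. wajsberg_star M \<longrightarrow> holds_in M t1 t2"
    using strong_quasi_wajsberg_star_qw_of_wstar holds_in_qw_of_wstar by blast
next
  assume W: "\<forall>M :: 'a wstar_alg. wajsberg_star M \<longrightarrow> holds_in M t1 t2"
  show "\<forall>A :: 'a qw_alg. strong_quasi_wajsberg_star A \<longrightarrow> holds_in A t1 t2"
  proof (intro allI impI)
    fix A :: "'a qw_alg"
    assume "strong_quasi_wajsberg_star A"
    then interpret strong_quasi_wajsberg_star_algebra A
      by unfold_locales
    show "holds_in A t1 t2"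
      using W wajsberg_star_regular_part holds_in_regular_part assms by blast
  qed
qed

end
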